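(* Let $OABC$ be a quadrilateral in the hyperbolic plane with right angles at $A$, $B$, $C$ and angle $\alpha\in(0,\pi/2)$ at $O$. Let $d$ be the length of $OA$, $L$ the length of $AB$, $\ell$ the length of $BC$, and let the length of $OC$ be $L+h$. Let $M$ be the point of the side $OC$ at hyperbolic distance $h$ from $O$ (equivalently, at distance $L$ from $C$). Place the quadrilateral in the Poincar\'e unit disc model with $O$ at the center of the disc, let $s$ be the Euclidean distance from $O$ to $A$ and $t$ the Euclidean distance from $O$ to $M$ (so that $d=\log\frac{1+s}{1-s}$ and $h=\log\frac{1+t}{1-t}$). Then \[ \tanh L=\frac{\cos\alpha}{\sin\alpha}\,\frac{1-s^2}{2s}\qquad\text{and}\qquad t=\frac{\cos\alpha}{\sin\alpha+1}\,s . \] *)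

theory Defs
  imports "HOL-Analysis.Analysis"
begin

text \<open>Poincare unit disc model of the hyperbolic plane (curvature -1).\<close>

definition in_disc :: "complex \<Rightarrow> bool" where
  "in_disc z \<longleftrightarrow> cmod z < 1"

definition hdist :: "complex \<Rightarrow> complex \<Rightarrow> real" where
  "hdist z w = 2 * artanh (cmod (z - w) / cmod (1 - cnj z * w))"

definition hseg :: "complex \<Rightarrow> complex \<Rightarrow> complex set" where
  "hseg X Y = {P. in_disc P \<and> hdist X P + hdist P Y = hdist X Y}"

definition to_origin :: "complex \<Rightarrow> complex \<Rightarrow> complex" where
  "to_origin V z = (z - V) / (1 - cnj V * z)"

text \<open>Hyperbolic angle at vertex V between the geodesics V X and V Y: after moving V to
  the origin by an isometry, geodesics through the origin are diameters, and the
  (conformal) angle is the Euclidean angle between the image points.\<close>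
definition hangle :: "complex \<Rightarrow> complex \<Rightarrow> complex \<Rightarrow> real" where
  "hangle V X Y = (let x = to_origin V X; y = to_origin V Y in
     arccos (Re (x * cnj y) / (cmod x * cmod y)))"

definition convex_quad :: "complex \<Rightarrow> complex \<Rightarrow> complex \<Rightarrow> complex \<Rightarrow> bool" where
  "convex_quad P Q R S \<longleftrightarrow> in_disc P \<and> in_disc Q \<and> in_disc R \<and> in_disc S \<and>
     distinct [P, Q, R, S] \<and> hseg P R \<inter> hseg Q S \<noteq> {}"

end

theory Submission
  imports Defs
begin

text \<open>Put the vertex O at the centre of the disc, so that the geodesics through O are
  diameters. The sides AB and BC then lie on circles orthogonal to the unit circle, centred on
  the rays OA and OC; the right angles at A and C determine these circles, and the right angle
  at B makes them orthogonal to each other. This yields cos \<alpha> = tanh OA / tanh OC.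
  The right triangle OAB gives tanh AB = sinh OA * tan AOB, and eliminating the angle AOB
  with the same circles gives the formula for tanh L. Finally h = OC - L, and the subtraction
  formula for tanh, after the substitution w = tan (pi/4 - \<alpha>/2), turns into
  tanh h = tanh (2 * artanh (w * s)), that is t = w * s.\<close>

text \<open>P lies on the circle with centre Z orthogonal to the unit circle,
  i.e. cmod (P - Z)^2 = cmod Z^2 - 1; inside the disc such circles carry the geodesics
  not through the origin.\<close>
definition on_orth_circle :: "complex \<Rightarrow> complex \<Rightarrow> bool" where
  "on_orth_circle Z P \<longleftrightarrow> (cmod P)\<^sup>2 + 1 = 2 * Re (P * cnj Z)"

lemma tanh_artanh_real:
  fixes x :: real
  assumes "-1 < x" "x < 1"
  shows "tanh (artanh x) = x"
proof -
  have pos: "(1 - x) / (1 + x) > 0" "(1 + x) / (1 - x) > 0" using assms by auto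
  have "-2 * artanh x = ln ((1 - x) / (1 + x))"
    using pos assms by (simp add: artanh_def ln_div)
  then have e: "exp (-2 * artanh x) = (1 - x) / (1 + x)" using pos by simp
  show ?thesis using assms unfolding tanh_real_altdef e by (simp add: field_simps)
qed

lemma tanh_double_real: "tanh (2 * x) = 2 * tanh x / (1 + (tanh x)\<^sup>2)" for x :: real
  using tanh_add[of x x] by (simp add: power2_eq_square)

lemma tanh_diff_real: "tanh (x - y) = (tanh x - tanh y) / (1 - tanh x * tanh y)" for x y :: real
  using tanh_add[of x "-y"] by simp

lemma two_div_one_plus_sq_inj:
  fixes t u :: real
  assumes "0 \<le> t" "t < 1" "0 \<le> u" "u < 1" and eq: "2 * t / (1 + t\<^sup>2) = 2 * u / (1 + u\<^sup>2)"
  shows "t = u"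
proof -
  have "t * (1 + u\<^sup>2) = u * (1 + t\<^sup>2)"
  proof -
    have "1 + t\<^sup>2 \<noteq> 0" "1 + u\<^sup>2 \<noteq> 0" by (smt (verit) zero_le_power2)+
    then show ?thesis using eq by (simp add: frac_eq_eq)
  qed
  then have "(t - u) * (1 - t * u) = 0" by algebra
  moreover have "t * u < 1" using assms mult_strict_mono[of t 1 u 1] by simp
  ultimately show ?thesis by simp
qed

lemma norm_diff_less_norm_one_minus_cnj_mult:
  assumes "cmod z < 1" "cmod w < 1"
  shows "cmod (z - w) < cmod (1 - cnj z * w)"
proof -
  have "(cmod (1 - cnj z * w))\<^sup>2 - (cmod (z - w))\<^sup>2 = (1 - (cmod z)\<^sup>2) * (1 - (cmod w)\<^sup>2)"
    unfolding cmod_power2 by simp algebra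
  also have "\<dots> > 0" using assms by (simp add: power_less_one_iff)
  finally show ?thesis by (smt (verit) power_mono norm_ge_zero)
qed

lemma tanh_hdist:
  assumes "cmod z < 1" "cmod w < 1"
  shows "tanh (hdist z w) = 2 * cmod (z - w) * cmod (1 - cnj z * w)
           / ((cmod (z - w))\<^sup>2 + (cmod (1 - cnj z * w))\<^sup>2)"
proof -
  define a b where "a = cmod (z - w)" and "b = cmod (1 - cnj z * w)"
  have "0 \<le> a" "a < b" using norm_diff_less_norm_one_minus_cnj_mult[OF assms] by (auto simp: a_def b_def)
  then have "tanh (artanh (a / b)) = a / b" by (intro tanh_artanh_real) (auto simp: less_le_trans[of "-1" 0])
  then have "tanh (hdist z w) = 2 * (a / b) / (1 + (a / b)\<^sup>2)"
    by (simp add: hdist_def a_def b_def tanh_double_real)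
  also have "\<dots> = 2 * a * b / (a\<^sup>2 + b\<^sup>2)"
    using \<open>0 \<le> a\<close> \<open>a < b\<close> by (simp add: field_simps power2_eq_square)
  finally show ?thesis by (simp add: a_def b_def)
qed

lemma tanh_hdist_0:
  assumes "cmod z < 1"
  shows "tanh (hdist 0 z) = 2 * cmod z / (1 + (cmod z)\<^sup>2)"
  using tanh_hdist[of 0 z] assms by simp

lemma to_origin_nonzero:
  assumes "cmod V < 1" "cmod W < 1" "V \<noteq> W"
  shows "to_origin V W \<noteq> 0"
  using norm_diff_less_norm_one_minus_cnj_mult[OF assms(1,2)] assms(3)
  by (auto simp: to_origin_def)

lemma cos_hangle:
  "Re (to_origin V X * cnj (to_origin V Y))
     = cmod (to_origin V X) * cmod (to_origin V Y) * cos (hangle V X Y)"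
proof -
  define x y where "x = to_origin V X" and "y = to_origin V Y"
  show ?thesis
  proof (cases "x = 0 \<or> y = 0")
    case True
    then show ?thesis by (auto simp: x_def[symmetric] y_def[symmetric])
  next
    case False
    then have pos: "cmod x * cmod y > 0" by simp
    have "\<bar>Re (x * cnj y)\<bar> \<le> cmod x * cmod y"
      using abs_Re_le_cmod[of "x * cnj y"] by (simp add: norm_mult)
    then have "cos (hangle V X Y) = Re (x * cnj y) / (cmod x * cmod y)"
      using pos by (simp add: hangle_def x_def[symmetric] y_def[symmetric] Let_def
          cos_arccos divide_le_eq le_divide_eq abs_le_iff)
    then show ?thesis using pos by (simp add: x_def[symmetric] y_def[symmetric])
  qed
qed

lemma hangle_commute: "hangle V X Y = hangle V Y X"
proof -
  have "Re (x * cnj y) = Re (y * cnj x)" for x y :: complex by simp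
  then show ?thesis by (simp add: hangle_def Let_def mult.commute)
qed

lemma right_hangle_Re_eq_0:
  assumes "hangle V X Y = pi / 2"
  shows "Re (to_origin V X * cnj (to_origin V Y)) = 0"
  using cos_hangle[of V X Y, unfolded assms] by simp

lemma right_hangle_at_foot:
  assumes "hangle A 0 P = pi / 2"
  shows "Re (P * cnj A) * (1 + (cmod A)\<^sup>2) = (cmod A)\<^sup>2 * (1 + (cmod P)\<^sup>2)"
proof -
  have "Re (- A * cnj ((P - A) / (1 - cnj A * P))) = 0"
    using right_hangle_Re_eq_0[OF assms] by (simp add: to_origin_def)
  then have "Re ((- A * cnj (P - A)) / cnj (1 - cnj A * P)) = 0"
    by (simp add: complex_cnj_divide)
  then have "Re (- A * cnj (P - A) * (1 - cnj A * P)) = 0"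
    by (simp add: Re_complex_div_eq_0)
  then show ?thesis unfolding cmod_power2 by simp algebra
qed

lemma on_orth_circle_foot_iff:
  assumes "A \<noteq> 0"
  shows "on_orth_circle (of_real ((1 + (cmod A)\<^sup>2) / (2 * (cmod A)\<^sup>2)) * A) P
           \<longleftrightarrow> Re (P * cnj A) * (1 + (cmod A)\<^sup>2) = (cmod A)\<^sup>2 * (1 + (cmod P)\<^sup>2)"
  using assms by (auto simp: on_orth_circle_def field_simps)

text \<open>At V the geodesic from V to W is tangent to its supporting circle, hence orthogonal
  to the radius V - Z.\<close>
lemma to_origin_orth_radius:
  assumes "on_orth_circle Z V" "on_orth_circle Z W"
  shows "Re (to_origin V W * cnj (V - Z)) = 0"
proof -
  have "Re ((W - V) * cnj (V - Z) * cnj (1 - cnj V * W)) = 0"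
    using assms unfolding on_orth_circle_def cmod_power2 by simp algebra
  then have "Re ((W - V) * cnj (V - Z) / (1 - cnj V * W)) = 0"
    by (simp add: Re_complex_div_eq_0)
  then show ?thesis by (simp add: to_origin_def mult.commute mult.left_commute)
qed

lemma plane_orth_transfer:
  assumes "Re (x * cnj u) = 0" "Re (y * cnj v) = 0" "Re (x * cnj y) = 0" "x \<noteq> 0" "y \<noteq> 0"
  shows "Re (u * cnj v) = 0"
proof -
  have "((Re x)\<^sup>2 + (Im x)\<^sup>2) * ((Re y)\<^sup>2 + (Im y)\<^sup>2) * Re (u * cnj v) = 0"
    using assms(1-3) by simp algebra
  moreover have "(Re x)\<^sup>2 + (Im x)\<^sup>2 \<noteq> 0" "(Re y)\<^sup>2 + (Im y)\<^sup>2 \<noteq> 0"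
    using assms(4,5) by (simp_all add: complex_eq_iff)
  ultimately show ?thesis by auto
qed

lemma orth_circles_centres:
  assumes "on_orth_circle Z1 P" "on_orth_circle Z2 P" "Re ((P - Z1) * cnj (P - Z2)) = 0"
  shows "Re (Z1 * cnj Z2) = 1"
proof -
  have "Re ((P - Z1) * cnj (P - Z2))
          = (cmod P)\<^sup>2 - Re (P * cnj Z1) - Re (P * cnj Z2) + Re (Z1 * cnj Z2)"
    unfolding cmod_power2 by simp algebra
  then show ?thesis using assms unfolding on_orth_circle_def by linarith
qed

text \<open>The sides AB and BC lie on circles centred on the rays OA and OC; the right angle at B
  makes these circles orthogonal, i.e. their centres satisfy Re (Z1 * cnj Z2) = 1.\<close>
lemma lambert_relation:
  assumes disc: "cmod A < 1" "cmod B < 1" "cmod C < 1"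
    and nz: "A \<noteq> 0" "C \<noteq> 0" "A \<noteq> B" "B \<noteq> C"
    and angA: "hangle A 0 B = pi / 2"
    and angB: "hangle B A C = pi / 2"
    and angC: "hangle C B 0 = pi / 2"
  shows "Re (A * cnj C) * (1 + (cmod A)\<^sup>2) * (1 + (cmod C)\<^sup>2) = 4 * (cmod A)\<^sup>2 * (cmod C)\<^sup>2"
proof -
  define a c where "a = (1 + (cmod A)\<^sup>2) / (2 * (cmod A)\<^sup>2)"
    and "c = (1 + (cmod C)\<^sup>2) / (2 * (cmod C)\<^sup>2)"
  define Z1 Z2 where "Z1 = of_real a * A" and "Z2 = of_real c * C"
  have on_Z1: "on_orth_circle Z1 P \<longleftrightarrow> Re (P * cnj A) * (1 + (cmod A)\<^sup>2) = (cmod A)\<^sup>2 * (1 + (cmod P)\<^sup>2)"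
    for P unfolding Z1_def a_def using \<open>A \<noteq> 0\<close> by (rule on_orth_circle_foot_iff)
  have on_Z2: "on_orth_circle Z2 P \<longleftrightarrow> Re (P * cnj C) * (1 + (cmod C)\<^sup>2) = (cmod C)\<^sup>2 * (1 + (cmod P)\<^sup>2)"
    for P unfolding Z2_def c_def using \<open>C \<noteq> 0\<close> by (rule on_orth_circle_foot_iff)
  have foot: "on_orth_circle Z1 A" "on_orth_circle Z1 B" "on_orth_circle Z2 C" "on_orth_circle Z2 B"
    using right_hangle_at_foot[OF angA] right_hangle_at_foot[OF angC[folded hangle_commute[of C 0 B]]]
    by (simp_all add: on_Z1 on_Z2 complex_norm_square[symmetric])
  have "to_origin B A \<noteq> 0" "to_origin B C \<noteq> 0"
    using to_origin_nonzero[of B A] to_origin_nonzero[of B C] disc nz by auto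
  then have "Re ((B - Z1) * cnj (B - Z2)) = 0"
    by (rule plane_orth_transfer[OF to_origin_orth_radius[OF foot(2,1)]
          to_origin_orth_radius[OF foot(4,3)] right_hangle_Re_eq_0[OF angB]])
  then have "Re (Z1 * cnj Z2) = 1" using foot by (intro orth_circles_centres)
  then have "Re (A * cnj C) * a * c = 1" by (simp add: Z1_def Z2_def algebra_simps)
  then show ?thesis using nz by (simp add: a_def c_def field_simps)
qed

lemma lambert_gram_relation:
  assumes footA: "Re (B * cnj A) * (1 + (cmod A)\<^sup>2) = (cmod A)\<^sup>2 * (1 + (cmod B)\<^sup>2)"
    and footC: "Re (B * cnj C) * (1 + (cmod C)\<^sup>2) = (cmod C)\<^sup>2 * (1 + (cmod B)\<^sup>2)"
    and lambert: "Re (A * cnj C) * (1 + (cmod A)\<^sup>2) * (1 + (cmod C)\<^sup>2) = 4 * (cmod A)\<^sup>2 * (cmod C)\<^sup>2"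
    and "C \<noteq> 0"
  shows "4 * (cmod A)\<^sup>2 * Im (B * cnj A) * Im (A * cnj C)
           = - Re (B * cnj A) * Re (A * cnj C) * (1 - (cmod A)\<^sup>2)\<^sup>2"
proof -
  define s c g r where "s = cmod A" and "c = cmod C" and "g = Re (B * cnj A)" and "r = Re (A * cnj C)"
  have gram: "s\<^sup>2 * Re (B * cnj C) = g * r - Im (B * cnj A) * Im (A * cnj C)"
    unfolding s_def g_def r_def cmod_power2 by simp algebra
  have "c\<^sup>2 * (r * g * (1 + s\<^sup>2)\<^sup>2) = c\<^sup>2 * (4 * s ^ 4 * Re (B * cnj C))"
    using footA footC lambert unfolding s_def c_def g_def r_def by algebra
  then have "r * g * (1 + s\<^sup>2)\<^sup>2 = 4 * s ^ 4 * Re (B * cnj C)"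
    using \<open>C \<noteq> 0\<close> by (simp add: c_def)
  then show ?thesis using gram unfolding s_def[symmetric] g_def[symmetric] r_def[symmetric] by algebra
qed

text \<open>Hyperbolic right triangle with legs OA and AB: tanh AB = sinh OA * tan AOB, where
  sinh OA = 2 cmod A / (1 - cmod A^2) and tan AOB = |Im (B cnj A)| / Re (B cnj A).\<close>
lemma tanh_hdist_foot:
  assumes "cmod A < 1" "cmod B < 1"
    and foot: "Re (B * cnj A) * (1 + (cmod A)\<^sup>2) = (cmod A)\<^sup>2 * (1 + (cmod B)\<^sup>2)"
  shows "tanh (hdist A B) * (1 - (cmod A)\<^sup>2) * Re (B * cnj A) = 2 * cmod A * \<bar>Im (B * cnj A)\<bar>"
proof -
  define s a b g where "s = cmod A" and "a = cmod (A - B)" and "b = cmod (1 - cnj A * B)"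
    and "g = Re (B * cnj A)"
  have a_sq: "a\<^sup>2 = s\<^sup>2 - 2 * g + (cmod B)\<^sup>2"
    unfolding a_def s_def g_def cmod_power2 by simp algebra
  have b_sq: "b\<^sup>2 = 1 - 2 * g + s\<^sup>2 * (cmod B)\<^sup>2"
    unfolding b_def s_def g_def cmod_power2 by simp algebra
  have norm_prod: "s\<^sup>2 * (cmod B)\<^sup>2 = g\<^sup>2 + (Im (B * cnj A))\<^sup>2"
    unfolding s_def g_def cmod_power2 by simp algebra
  have foot': "g * (1 + s\<^sup>2) = s\<^sup>2 * (1 + (cmod B)\<^sup>2)" using foot by (simp add: s_def g_def)
  have sum: "s\<^sup>2 * (a\<^sup>2 + b\<^sup>2) = (1 - s\<^sup>2)\<^sup>2 * g"
    using a_sq b_sq foot' by algebra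
  have "(s * (a * b))\<^sup>2 = ((1 - s\<^sup>2) * \<bar>Im (B * cnj A)\<bar>)\<^sup>2"
    using a_sq b_sq foot' norm_prod by (simp add: power_mult_distrib) algebra
  moreover have s1: "s\<^sup>2 < 1" using \<open>cmod A < 1\<close> by (simp add: s_def power_less_one_iff)
  ultimately have prod: "s * (a * b) = (1 - s\<^sup>2) * \<bar>Im (B * cnj A)\<bar>"
    by (subst (asm) power2_eq_iff_nonneg) (simp_all add: s_def a_def b_def)
  have "0 \<le> a" "a < b"
    using norm_diff_less_norm_one_minus_cnj_mult[OF assms(1,2)] by (auto simp: a_def b_def)
  have "tanh (hdist A B) = 2 * a * b / (a\<^sup>2 + b\<^sup>2)"
    using tanh_hdist[OF assms(1,2)] by (simp add: a_def b_def)
  then have "tanh (hdist A B) * (a\<^sup>2 + b\<^sup>2) = 2 * a * b"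
    using \<open>0 \<le> a\<close> \<open>a < b\<close> by (simp add: add_nonneg_pos)
  then have "tanh (hdist A B) * (1 - s\<^sup>2) * g * (1 - s\<^sup>2) = 2 * s * (s * (a * b))"
    using sum by algebra
  then have "(tanh (hdist A B) * (1 - s\<^sup>2) * g) * (1 - s\<^sup>2) = (2 * s * \<bar>Im (B * cnj A)\<bar>) * (1 - s\<^sup>2)"
    using prod by (simp add: mult.assoc)
  then show ?thesis using s1 by (simp add: s_def g_def)
qed

locale lambert_quadrilateral =
  fixes A B C :: complex and \<alpha> :: real
  assumes in_disc: "cmod A < 1" "cmod B < 1" "cmod C < 1"
    and distinct: "A \<noteq> 0" "C \<noteq> 0" "A \<noteq> B" "B \<noteq> C"
    and right_A: "hangle A 0 B = pi / 2"
    and right_B: "hangle B A C = pi / 2"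
    and right_C: "hangle C B 0 = pi / 2"
    and angle_O: "hangle 0 A C = \<alpha>"
    and acute: "0 < \<alpha>" "\<alpha> < pi / 2"
begin

lemma Re_A_cnj_C: "Re (A * cnj C) = cmod A * cmod C * cos \<alpha>"
  using cos_hangle[of 0 A C] by (simp add: to_origin_def angle_O)

lemma abs_Im_A_cnj_C: "\<bar>Im (A * cnj C)\<bar> = cmod A * cmod C * sin \<alpha>"
proof -
  have "(Im (A * cnj C))\<^sup>2 = (cmod (A * cnj C))\<^sup>2 - (Re (A * cnj C))\<^sup>2"
    by (simp add: cmod_power2)
  also have "\<dots> = (cmod A * cmod C * sin \<alpha>)\<^sup>2"
    unfolding Re_A_cnj_C norm_mult complex_mod_cnj
    by (simp add: power_mult_distrib sin_squared_eq algebra_simps)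
  finally have "sqrt ((Im (A * cnj C))\<^sup>2) = sqrt ((cmod A * cmod C * sin \<alpha>)\<^sup>2)" by simp
  moreover have "sin \<alpha> \<ge> 0" using acute by (simp add: sin_ge_zero)
  ultimately show ?thesis by simp
qed

lemma lambert_cos:
  "cos \<alpha> * (1 + (cmod A)\<^sup>2) * (1 + (cmod C)\<^sup>2) = 4 * cmod A * cmod C"
proof -
  have "cmod A * cmod C * (cos \<alpha> * (1 + (cmod A)\<^sup>2) * (1 + (cmod C)\<^sup>2))
          = cmod A * cmod C * (4 * cmod A * cmod C)"
    using lambert_relation[OF in_disc distinct right_A right_B right_C]
    unfolding Re_A_cnj_C by (simp add: power2_eq_square mult_ac)
  then show ?thesis using distinct by simp
qed

lemma tanh_diagonal: "tanh (hdist 0 C) = cos \<alpha> * (1 + (cmod A)\<^sup>2) / (2 * cmod A)"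
proof -
  have pos: "1 + (cmod C)\<^sup>2 > 0" by (simp add: add_pos_nonneg)
  then have "tanh (hdist 0 C) * (1 + (cmod C)\<^sup>2) = 2 * cmod C"
    using tanh_hdist_0[OF in_disc(3)] by (simp add: field_simps)
  then have "(2 * cmod A * tanh (hdist 0 C)) * (1 + (cmod C)\<^sup>2)
               = (cos \<alpha> * (1 + (cmod A)\<^sup>2)) * (1 + (cmod C)\<^sup>2)"
    using lambert_cos by algebra
  then have "2 * cmod A * tanh (hdist 0 C) = cos \<alpha> * (1 + (cmod A)\<^sup>2)"
    using pos by (metis mult_right_cancel order_less_irrefl)
  then show ?thesis using distinct by (simp add: field_simps)
qed

lemma tanh_side: "tanh (hdist A B) = cos \<alpha> / sin \<alpha> * ((1 - (cmod A)\<^sup>2) / (2 * cmod A))"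
proof -
  define s c g k where "s = cmod A" and "c = cmod C" and "g = Re (B * cnj A)"
    and "k = \<bar>Im (B * cnj A)\<bar>"
  have foot_A: "Re (B * cnj A) * (1 + (cmod A)\<^sup>2) = (cmod A)\<^sup>2 * (1 + (cmod B)\<^sup>2)"
    using right_hangle_at_foot[OF right_A] .
  have foot_C: "Re (B * cnj C) * (1 + (cmod C)\<^sup>2) = (cmod C)\<^sup>2 * (1 + (cmod B)\<^sup>2)"
    using right_hangle_at_foot[OF right_C[folded hangle_commute[of C 0 B]]] .
  have s: "0 < s" "s\<^sup>2 < 1" "0 < c"
    using in_disc distinct by (simp_all add: s_def c_def power_less_one_iff)
  have "g * (1 + s\<^sup>2) > 0" using foot_A s by (simp add: g_def s_def add_pos_nonneg)
  then have g: "g > 0" by (smt (verit) zero_le_power2 zero_less_mult_iff)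
  have r: "Re (A * cnj C) = s * c * cos \<alpha>" "cos \<alpha> > 0"
    using Re_A_cnj_C acute by (simp_all add: s_def c_def cos_gt_zero)
  have "4 * s\<^sup>2 * k * \<bar>Im (A * cnj C)\<bar> = \<bar>4 * s\<^sup>2 * Im (B * cnj A) * Im (A * cnj C)\<bar>"
    by (simp add: k_def abs_mult)
  also have "\<dots> = g * Re (A * cnj C) * (1 - s\<^sup>2)\<^sup>2"
    using lambert_gram_relation[OF foot_A foot_C lambert_relation[OF in_disc distinct right_A right_B right_C]
        distinct(2)] g r s by (simp add: g_def s_def abs_mult)
  finally have "(s * c) * (4 * s\<^sup>2 * k * sin \<alpha>) = (s * c) * (g * cos \<alpha> * (1 - s\<^sup>2)\<^sup>2)"
    unfolding abs_Im_A_cnj_C r(1) s_def[symmetric] c_def[symmetric] by (simp add: mult_ac)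
  then have tan_AOB: "4 * s\<^sup>2 * k * sin \<alpha> = g * cos \<alpha> * (1 - s\<^sup>2)\<^sup>2"
    using s by simp
  have "tanh (hdist A B) * (1 - s\<^sup>2) * g = 2 * s * k"
    using tanh_hdist_foot[OF in_disc(1,2) foot_A] by (simp add: s_def g_def k_def)
  then have "(g * (1 - s\<^sup>2)) * (tanh (hdist A B) * (2 * s * sin \<alpha>))
               = (g * (1 - s\<^sup>2)) * (cos \<alpha> * (1 - s\<^sup>2))"
    using tan_AOB by algebra
  then have "tanh (hdist A B) * (2 * s * sin \<alpha>) = cos \<alpha> * (1 - s\<^sup>2)"
    using g s by simp
  moreover have "sin \<alpha> > 0" using acute by (simp add: sin_gt_zero)
  ultimately show ?thesis using s by (simp add: s_def field_simps)
qed

end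

text \<open>Here w = tan (pi/4 - \<alpha>/2).\<close>
lemma cos_sin_half_complement:
  fixes \<alpha> :: real
  assumes "0 < \<alpha>" "\<alpha> < pi / 2"
  defines "w \<equiv> cos \<alpha> / (sin \<alpha> + 1)"
  shows "0 < w" "w < 1" "cos \<alpha> = 2 * w / (1 + w\<^sup>2)" "sin \<alpha> = (1 - w\<^sup>2) / (1 + w\<^sup>2)"
proof -
  have k: "0 < cos \<alpha>" and m: "0 < sin \<alpha>" using assms by (simp_all add: cos_gt_zero sin_gt_zero)
  have "w\<^sup>2 = (1 - (sin \<alpha>)\<^sup>2) / (1 + sin \<alpha>)\<^sup>2"
    unfolding w_def power_divide cos_squared_eq by (simp add: add.commute)
  also have "\<dots> = (1 - sin \<alpha>) * (1 + sin \<alpha>) / ((1 + sin \<alpha>) * (1 + sin \<alpha>))"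
    by (simp add: power2_eq_square algebra_simps)
  also have "\<dots> = (1 - sin \<alpha>) / (1 + sin \<alpha>)"
    using m by simp
  finally have w_sq: "w\<^sup>2 = (1 - sin \<alpha>) / (1 + sin \<alpha>)" .
  have plus: "1 + w\<^sup>2 = 2 / (1 + sin \<alpha>)" and minus: "1 - w\<^sup>2 = 2 * sin \<alpha> / (1 + sin \<alpha>)"
    using m unfolding w_sq by (simp_all add: field_simps)
  show "0 < w" using k m by (simp add: w_def)
  have "cos \<alpha> < sin \<alpha> + 1" using m cos_le_one[of \<alpha>] by linarith
  then show "w < 1" using m by (simp add: w_def)
  show "cos \<alpha> = 2 * w / (1 + w\<^sup>2)" using m unfolding plus by (simp add: w_def field_simps)
  show "sin \<alpha> = (1 - w\<^sup>2) / (1 + w\<^sup>2)" using m unfolding plus minus by (simp add: field_simps)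
qed

lemma tanh_diagonal_minus_side:
  fixes \<alpha> s :: real
  assumes "0 < \<alpha>" "\<alpha> < pi / 2" "0 < s" "s < 1"
  defines "T \<equiv> cos \<alpha> / sin \<alpha> * ((1 - s\<^sup>2) / (2 * s))"
    and "Tc \<equiv> cos \<alpha> * (1 + s\<^sup>2) / (2 * s)"
    and "w \<equiv> cos \<alpha> / (sin \<alpha> + 1)"
  assumes "T < 1"
  shows "(Tc - T) / (1 - Tc * T) = 2 * (s * w) / (1 + (s * w)\<^sup>2)"
proof -
  note half = cos_sin_half_complement[OF assms(1,2), folded w_def]
  have w: "0 < w" "w\<^sup>2 < 1" using half(1,2) by (simp_all add: power_less_one_iff)
  have w_pm: "1 - w\<^sup>2 > 0" "1 + w\<^sup>2 > 0" using w by (simp_all add: add_pos_nonneg)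
  have cot: "cos \<alpha> / sin \<alpha> = 2 * w / (1 - w\<^sup>2)"
    unfolding half(3,4) using w_pm by (simp add: divide_divide_eq_right)
  have T_w: "T = w * (1 - s\<^sup>2) / (s * (1 - w\<^sup>2))"
    using w_pm assms(3) unfolding T_def cot by (simp add: field_simps)
  have Tc_w: "Tc = w * (1 + s\<^sup>2) / (s * (1 + w\<^sup>2))"
    using w_pm assms(3) mult_pos_pos[OF assms(3) w_pm(2)] unfolding Tc_def half(3)
    by (simp add: field_simps)
  have "w * (1 - s\<^sup>2) < s * (1 - w\<^sup>2)"
    using \<open>T < 1\<close> w assms(3) unfolding T_w by (simp add: divide_less_eq)
  then have "(s - w) * (1 + s * w) > 0" by (simp add: algebra_simps power2_eq_square)
  moreover have "1 + s * w > 0" using w assms(3) by (simp add: add_pos_pos)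
  ultimately have "w < s" by (simp add: zero_less_mult_iff)
  then have "s\<^sup>2 - w\<^sup>2 > 0" using w by (simp add: power_strict_mono)
  have T_clear: "T * (s * (1 - w\<^sup>2)) = w * (1 - s\<^sup>2)" and Tc_clear: "Tc * (s * (1 + w\<^sup>2)) = w * (1 + s\<^sup>2)"
    using w_pm assms(3) unfolding T_w Tc_w by simp_all
  define D where "D = s\<^sup>2 * (1 - w\<^sup>2) * (1 + w\<^sup>2)"
  have "D > 0" using w_pm assms(3) by (simp add: D_def)
  have "(1 - Tc * T) * D = (s\<^sup>2 - w\<^sup>2) * (1 + (s * w)\<^sup>2)"
    using T_clear Tc_clear unfolding D_def by algebra
  moreover have "(s\<^sup>2 - w\<^sup>2) * (1 + (s * w)\<^sup>2) > 0"
    using \<open>s\<^sup>2 - w\<^sup>2 > 0\<close> by (simp add: add_pos_nonneg)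
  ultimately have "1 - Tc * T \<noteq> 0" by fastforce
  have "D * ((Tc - T) * (1 + (s * w)\<^sup>2)) = D * (2 * (s * w) * (1 - Tc * T))"
    using T_clear Tc_clear unfolding D_def by algebra
  then have "(Tc - T) * (1 + (s * w)\<^sup>2) = 2 * (s * w) * (1 - Tc * T)" using \<open>D > 0\<close> by simp
  moreover have "1 + (s * w)\<^sup>2 \<noteq> 0" by (smt (verit) zero_le_power2)
  ultimately show ?thesis using \<open>1 - Tc * T \<noteq> 0\<close> by (simp add: frac_eq_eq)
qed

theorem mainTheorem1:
  fixes A B C M :: complex and \<alpha> L l d h s t :: real
  assumes quad: "convex_quad 0 A B C"
    and angA: "hangle A 0 B = pi / 2"
    and angB: "hangle B A C = pi / 2"
    and angC: "hangle C B 0 = pi / 2"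
    and angO: "hangle 0 A C = \<alpha>"
    and alpha: "0 < \<alpha>" "\<alpha> < pi / 2"
    and d_def: "d = hdist 0 A"
    and L_def: "L = hdist A B"
    and l_def: "l = hdist B C"
    and h_def: "hdist 0 C = L + h"
    and M_on: "M \<in> hseg 0 C"
    and M_dist: "hdist 0 M = h"
    and s_def: "s = cmod A"
    and t_def: "t = cmod M"
  shows "tanh L = cos \<alpha> / sin \<alpha> * ((1 - s^2) / (2 * s))
         \<and> t = cos \<alpha> / (sin \<alpha> + 1) * s"
proof -
  have disc: "cmod A < 1" "cmod B < 1" "cmod C < 1" and nz: "A \<noteq> 0" "C \<noteq> 0" "A \<noteq> B" "B \<noteq> C"
    using quad unfolding convex_quad_def in_disc_def by auto
  interpret lambert_quadrilateral A B C \<alpha>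
    using disc nz angA angB angC angO alpha by unfold_locales
  have side: "tanh L = cos \<alpha> / sin \<alpha> * ((1 - s\<^sup>2) / (2 * s))"
    using tanh_side by (simp add: L_def s_def)
  define w where "w = cos \<alpha> / (sin \<alpha> + 1)"
  have s: "0 < s" "s < 1" using disc nz by (simp_all add: s_def)
  have "tanh h = tanh (hdist 0 C - L)" using h_def by simp
  also have "\<dots> = 2 * (s * w) / (1 + (s * w)\<^sup>2)"
    unfolding tanh_diff_real tanh_diagonal side s_def[symmetric] w_def
    using tanh_diagonal_minus_side[OF alpha s] side tanh_real_lt_1[of L] by simp
  finally have tanh_h: "tanh h = 2 * (s * w) / (1 + (s * w)\<^sup>2)" .
  have "t < 1" using M_on by (simp add: t_def hseg_def in_disc_def)
  then have eq: "2 * t / (1 + t\<^sup>2) = 2 * (s * w) / (1 + (s * w)\<^sup>2)"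
    using tanh_h tanh_hdist_0[of M] M_dist by (simp add: t_def)
  have "0 < w" "w < 1" using cos_sin_half_complement[OF alpha] by (simp_all add: w_def)
  then have "0 \<le> s * w" "s * w < 1" using s mult_strict_mono[of s 1 w 1] by simp_all
  then have "t = s * w"
    using two_div_one_plus_sq_inj[OF _ \<open>t < 1\<close> _ _ eq] by (simp add: t_def)
  show ?thesis using side \<open>t = s * w\<close> by (simp add: w_def)
qed

end
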